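(* Let $n$ and $m$ be positive integers, let $\mathcal{X}_1, \dots, \mathcal{X}_m$ be vector spaces over a field $\mathbb{F}$, and let $x_a = x_{a,1}\otimes\cdots\otimes x_{a,m}$, $a\in\{1,\dots,n\}$, be linearly independent product vectors (all $x_{a,j}\in\mathcal{X}_j$ non-zero). If there exist non-zero scalars $\alpha_1, \dots, \alpha_n \in \mathbb{F} \setminus \{0\}$ such that $\sum_{a =1}^n \alpha_a x_a$ is a product vector, then $\dim \operatorname{span} \{ x_{a, j}: a \in \{1,\dots,n\}\} >1$ for at most $n-1$ indices $j \in \{1,\dots,m\}$.
   Context: A product vector in $\mathcal{X}_1\otimes\cdots\otimes\mathcal{X}_m$ is a vector $x_1\otimes\cdots\otimes x_m$ with all $x_j$ non-zero (in particular, a product vector is non-zero). *)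

theory Defs
  imports Complex_Main "HOL-Library.Function_Algebras"
begin

text \<open>Model: each space X_j is realised as a subspace of the coordinate space 'b => 'a
 (every vector space over 'a embeds into such a space). The tensor product
 X_1 (x) ... (x) X_m is realised inside the functions (nat => 'b) => 'a, the product vector
 v_1 (x) ... (x) v_m being the function f |-> prod_{j=1..m} v_j (f j). The natural map from
 the algebraic tensor product into this function space is injective, so this is faithful.\<close>

definition fscale :: "'a::field \<Rightarrow> ('x \<Rightarrow> 'a) \<Rightarrow> ('x \<Rightarrow> 'a)" where
  "fscale c f = (\<lambda>x. c * f x)"

lemma vector_space_fscale: "vector_space (fscale :: 'a::field \<Rightarrow> ('x \<Rightarrow> 'a) \<Rightarrow> _)"
  by unfold_locales (auto simp: fscale_def algebra_simps fun_eq_iff)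

definition tensor :: "nat \<Rightarrow> (nat \<Rightarrow> 'b \<Rightarrow> 'a::field) \<Rightarrow> ((nat \<Rightarrow> 'b) \<Rightarrow> 'a)" where
  "tensor m v = (\<lambda>f. \<Prod>j\<in>{1..m}. v j (f j))"

definition product_vector :: "nat \<Rightarrow> ((nat \<Rightarrow> 'b) \<Rightarrow> 'a::field) \<Rightarrow> bool" where
  "product_vector m z \<longleftrightarrow> (\<exists>v. (\<forall>j\<in>{1..m}. v j \<noteq> 0) \<and> z = tensor m v)"

definition lin_indep_family :: "'i set \<Rightarrow> ('i \<Rightarrow> 'x \<Rightarrow> 'a::field) \<Rightarrow> bool" where
  "lin_indep_family I v \<longleftrightarrow>
     (\<forall>c. (\<Sum>i\<in>I. fscale (c i) (v i)) = 0 \<longrightarrow> (\<forall>i\<in>I. c i = 0))"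

end

theory Submission
  imports Defs
begin

text \<open>Adjoin the product vector \<open>y = \<Sum>\<^sub>a \<alpha>\<^sub>a x\<^sub>a\<close> to the family as \<open>x\<^sub>0\<close>. Since the only linear
  relation among \<open>x\<^sub>0, \<dots>, x\<^sub>n\<close> has all coefficients non-zero, the enlarged family is connected:
  whenever it is split into two non-empty parts, the spans of the parts meet non-trivially.
  By induction on the number of tensor factors one shows that a connected family of product
  vectors spanned by a subfamily \<open>B\<close> has fewer than \<open>|B|\<close> positions at which the factors are not
  all parallel. Removing the last factor preserves connectedness and spanning. If the last
  factors are not all parallel, the truncated vectors indexed by \<open>B\<close> are linearly dependent:
  otherwise, comparing expansions in \<open>B\<close>, every vector only involves members of \<open>B\<close> whose last
  factor is parallel to its own, so the classes of parallel last factors would split the family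
  into parts with independent spans. Hence \<open>B\<close> can be shrunk by one element.\<close>

definition lincomb :: "('i \<Rightarrow> 'x \<Rightarrow> 'a::field) \<Rightarrow> 'i set \<Rightarrow> ('i \<Rightarrow> 'a) \<Rightarrow> 'x \<Rightarrow> 'a" where
  "lincomb v I c = (\<Sum>i\<in>I. fscale (c i) (v i))"

definition parallel :: "('x \<Rightarrow> 'a::field) \<Rightarrow> ('x \<Rightarrow> 'a) \<Rightarrow> bool" where
  "parallel u w \<longleftrightarrow> (\<exists>c. u = fscale c w)"

definition span_connected :: "'i set \<Rightarrow> ('i \<Rightarrow> 'x \<Rightarrow> 'a::field) \<Rightarrow> bool" where
  "span_connected A v \<longleftrightarrow> (\<forall>A1\<subseteq>A. A1 \<noteq> {} \<longrightarrow> A1 \<noteq> A \<longrightarrow>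
      (\<exists>g. g \<noteq> 0 \<and> (\<exists>c. g = lincomb v A1 c) \<and> (\<exists>d. g = lincomb v (A - A1) d)))"

definition nonparallel_positions :: "nat \<Rightarrow> ('i \<Rightarrow> nat \<Rightarrow> 'x \<Rightarrow> 'a::field) \<Rightarrow> 'i set \<Rightarrow> nat set"
  where "nonparallel_positions m v A = {j\<in>{1..m}. \<exists>a\<in>A. \<exists>b\<in>A. \<not> parallel (v a j) (v b j)}"

lemma lincomb_apply [simp]: "lincomb v I c x = (\<Sum>i\<in>I. c i * v i x)"
proof (cases "finite I")
  case True
  then show ?thesis
    by (induction I rule: finite_induct) (simp_all add: lincomb_def fscale_def)
qed (simp add: lincomb_def)

lemma lincomb_diff: "lincomb v I c - lincomb v I d = lincomb v I (\<lambda>i. c i - d i)"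
  by (simp add: fun_eq_iff sum_subtractf left_diff_distrib)

lemma lincomb_fscale: "fscale r (lincomb v I c) = lincomb v I (\<lambda>i. r * c i)"
  by (simp add: fscale_def fun_eq_iff sum_distrib_left mult.assoc)

lemma lincomb_delta:
  assumes "finite I" "i \<in> I"
  shows "v i = lincomb v I (\<lambda>j. if j = i then 1 else 0)"
  using assms by (simp add: fun_eq_iff if_distrib[of "\<lambda>x. x * _"] cong: if_cong)

lemma lincomb_compose:
  assumes "\<forall>a\<in>X. v a = lincomb v Y (\<gamma> a)"
  shows "lincomb v X c = lincomb v Y (\<lambda>b. \<Sum>a\<in>X. c a * \<gamma> a b)"
proof
  fix f
  have "lincomb v X c f = (\<Sum>a\<in>X. \<Sum>b\<in>Y. c a * \<gamma> a b * v b f)"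
    using assms by (simp add: sum_distrib_left mult.assoc cong: sum.cong)
  also have "\<dots> = (\<Sum>b\<in>Y. \<Sum>a\<in>X. c a * \<gamma> a b * v b f)"
    by (rule sum.swap)
  also have "\<dots> = lincomb v Y (\<lambda>b. \<Sum>a\<in>X. c a * \<gamma> a b) f"
    by (simp add: sum_distrib_right)
  finally show "lincomb v X c f = lincomb v Y (\<lambda>b. \<Sum>a\<in>X. c a * \<gamma> a b) f" .
qed

lemma lincomb_eliminate:
  assumes "finite B" "b0 \<in> B" "lincomb v B e = 0" "e b0 \<noteq> 0"
  shows "lincomb v B g = lincomb v (B - {b0}) (\<lambda>b. g b - g b0 / e b0 * e b)"
proof
  fix f
  have "lincomb v B g f = lincomb v B g f - g b0 / e b0 * lincomb v B e f"
    using assms(3) by simp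
  also have "\<dots> = (\<Sum>b\<in>B. (g b - g b0 / e b0 * e b) * v b f)"
    by (simp add: sum_subtractf sum_distrib_left algebra_simps)
  also have "\<dots> = lincomb v (B - {b0}) (\<lambda>b. g b - g b0 / e b0 * e b) f"
    using assms(1,2,4) by (simp add: sum.remove)
  finally show "lincomb v B g f = lincomb v (B - {b0}) (\<lambda>b. g b - g b0 / e b0 * e b) f" .
qed

lemma lin_indep_family_lincomb:
  "lin_indep_family I v \<longleftrightarrow> (\<forall>c. lincomb v I c = 0 \<longrightarrow> (\<forall>i\<in>I. c i = 0))"
  by (simp add: lin_indep_family_def lincomb_def)

lemma lin_indep_family_coeff_unique:
  assumes "lin_indep_family I v" "lincomb v I c = lincomb v I d" "i \<in> I"
  shows "c i = d i"
proof -
  have "lincomb v I (\<lambda>i. c i - d i) = 0"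
    using assms(2) lincomb_diff[of v I c d] by simp
  with assms(1,3) show ?thesis
    unfolding lin_indep_family_lincomb by fastforce
qed

lemma lin_indep_family_subset:
  assumes "lin_indep_family I v" "finite I" "J \<subseteq> I"
  shows "lin_indep_family J v"
  unfolding lin_indep_family_lincomb
proof (intro allI impI ballI)
  fix c j assume c: "lincomb v J c = 0" and "j \<in> J"
  have "lincomb v I (\<lambda>i. if i \<in> J then c i else 0) = lincomb v J c"
  proof
    fix x
    have "(\<Sum>i\<in>I. (if i \<in> J then c i else 0) * v i x) = (\<Sum>i\<in>I. if i \<in> J then c i * v i x else 0)"
      by (rule sum.cong) simp_all
    also have "\<dots> = (\<Sum>i\<in>I \<inter> J. c i * v i x)"
      using assms(2) by (rule sum.inter_restrict[symmetric])
    also have "I \<inter> J = J"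
      using assms(3) by blast
    finally show "lincomb v I (\<lambda>i. if i \<in> J then c i else 0) x = lincomb v J c x"
      by simp
  qed
  with c have "lincomb v I (\<lambda>i. if i \<in> J then c i else 0) = 0"
    by simp
  with assms(1) have "\<forall>i\<in>I. (if i \<in> J then c i else 0) = 0"
    unfolding lin_indep_family_lincomb by blast
  with \<open>j \<in> J\<close> \<open>J \<subseteq> I\<close> have "(if j \<in> J then c j else 0) = 0"
    by blast
  with \<open>j \<in> J\<close> show "c j = 0"
    by simp
qed

lemma spanned_Diff_if_not_lin_indep:
  assumes "\<not> lin_indep_family B u" "finite B"
    and "\<forall>a\<in>A. \<exists>\<gamma>. u a = lincomb u B \<gamma>"
  obtains b0 where "b0 \<in> B" "\<forall>a\<in>A. \<exists>\<gamma>. u a = lincomb u (B - {b0}) \<gamma>"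
proof -
  from assms(1) obtain e b0 where e: "lincomb u B e = 0" "b0 \<in> B" "e b0 \<noteq> 0"
    unfolding lin_indep_family_lincomb by blast
  have "\<exists>\<gamma>. u a = lincomb u (B - {b0}) \<gamma>" if "a \<in> A" for a
  proof -
    from assms(3) that obtain \<gamma> where "u a = lincomb u B \<gamma>"
      by blast
    also have "\<dots> = lincomb u (B - {b0}) (\<lambda>b. \<gamma> b - \<gamma> b0 / e b0 * e b)"
      by (rule lincomb_eliminate[OF assms(2) e(2,1,3)])
    finally show ?thesis by blast
  qed
  with e(2) show ?thesis by (blast intro: that)
qed

lemma parallel_refl: "parallel u u"
  unfolding parallel_def by (rule exI[of _ 1]) (simp add: fscale_def)

lemma parallel_trans: "parallel u w \<Longrightarrow> parallel w z \<Longrightarrow> parallel u z"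
  unfolding parallel_def fscale_def by (metis mult.assoc)

lemma parallel_sym:
  assumes "parallel u w" "u \<noteq> 0"
  shows "parallel w u"
proof -
  obtain c where c: "u = fscale c w" using assms(1) by (auto simp: parallel_def)
  with assms(2) have "c \<noteq> 0" by (auto simp: fscale_def fun_eq_iff)
  with c have "w = fscale (inverse c) u" by (simp add: fscale_def fun_eq_iff)
  then show ?thesis by (auto simp: parallel_def)
qed

lemma tensor_nonzero:
  assumes "\<forall>j\<in>{1..m}. v j \<noteq> 0"
  shows "tensor m v \<noteq> 0"
proof
  assume "tensor m v = 0"
  define f where "f j = (SOME t. v j t \<noteq> 0)" for j
  have "v j (f j) \<noteq> 0" if "j \<in> {1..m}" for j
  proof -
    from assms that have "\<exists>t. v j t \<noteq> 0" by (auto simp: fun_eq_iff)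
    then show ?thesis unfolding f_def by (rule someI_ex)
  qed
  then have "tensor m v f \<noteq> 0" by (simp add: tensor_def)
  with \<open>tensor m v = 0\<close> show False by simp
qed

lemma tensor_Suc_upd: "tensor (Suc k) v (f(Suc k := t)) = tensor k v f * v (Suc k) t"
proof -
  have "tensor k v (f(Suc k := t)) = tensor k v f"
    unfolding tensor_def by (rule prod.cong) auto
  then show ?thesis
    by (simp add: tensor_def atLeastAtMostSuc_conv mult.commute)
qed

lemma lincomb_tensor_Suc_upd:
  "lincomb (\<lambda>a. tensor (Suc k) (v a)) X c (f(Suc k := t)) =
   lincomb (\<lambda>a. tensor k (v a)) X (\<lambda>a. c a * v a (Suc k) t) f"
  by (simp add: tensor_Suc_upd mult_ac)

lemma span_connected_tensor_Suc:
  assumes "span_connected A (\<lambda>a. tensor (Suc k) (v a))"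
  shows "span_connected A (\<lambda>a. tensor k (v a))"
  unfolding span_connected_def
proof (intro allI impI)
  fix A1 assume "A1 \<subseteq> A" "A1 \<noteq> {}" "A1 \<noteq> A"
  with assms obtain g c d where g: "g \<noteq> 0"
    "g = lincomb (\<lambda>a. tensor (Suc k) (v a)) A1 c"
    "g = lincomb (\<lambda>a. tensor (Suc k) (v a)) (A - A1) d"
    unfolding span_connected_def by blast
  then obtain f0 where "g f0 \<noteq> 0" by (auto simp: fun_eq_iff)
  define t where "t = f0 (Suc k)"
  define h where "h f = g (f(Suc k := t))" for f
  have "h = lincomb (\<lambda>a. tensor k (v a)) A1 (\<lambda>a. c a * v a (Suc k) t)"
    unfolding h_def g(2) by (rule ext) (rule lincomb_tensor_Suc_upd)
  moreover have "h = lincomb (\<lambda>a. tensor k (v a)) (A - A1) (\<lambda>a. d a * v a (Suc k) t)"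
    unfolding h_def g(3) by (rule ext) (rule lincomb_tensor_Suc_upd)
  moreover have "h \<noteq> 0"
    using \<open>g f0 \<noteq> 0\<close> by (auto simp: h_def t_def fun_eq_iff intro!: exI[of _ f0])
  ultimately show "\<exists>g. g \<noteq> 0 \<and> (\<exists>c. g = lincomb (\<lambda>a. tensor k (v a)) A1 c)
      \<and> (\<exists>d. g = lincomb (\<lambda>a. tensor k (v a)) (A - A1) d)"
    by blast
qed

lemma lincomb_tensor_Suc_slice:
  assumes "tensor (Suc k) (v a) = lincomb (\<lambda>b. tensor (Suc k) (v b)) B \<beta>"
  shows "fscale (v a (Suc k) t) (tensor k (v a)) =
    lincomb (\<lambda>b. tensor k (v b)) B (\<lambda>b. \<beta> b * v b (Suc k) t)"
proof
  fix f
  have "fscale (v a (Suc k) t) (tensor k (v a)) f = tensor (Suc k) (v a) (f(Suc k := t))"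
    by (simp add: fscale_def tensor_Suc_upd mult.commute)
  also have "\<dots> = lincomb (\<lambda>b. tensor (Suc k) (v b)) B \<beta> (f(Suc k := t))"
    by (simp only: assms)
  also have "\<dots> = lincomb (\<lambda>b. tensor k (v b)) B (\<lambda>b. \<beta> b * v b (Suc k) t) f"
    by (rule lincomb_tensor_Suc_upd)
  finally show "fscale (v a (Suc k) t) (tensor k (v a)) f =
    lincomb (\<lambda>b. tensor k (v b)) B (\<lambda>b. \<beta> b * v b (Suc k) t) f" .
qed

lemma spanned_tensor_Suc:
  assumes "\<forall>a\<in>A. v a (Suc k) \<noteq> 0"
    and "\<forall>a\<in>A. \<exists>\<beta>. tensor (Suc k) (v a) = lincomb (\<lambda>b. tensor (Suc k) (v b)) B \<beta>"
  shows "\<forall>a\<in>A. \<exists>\<gamma>. tensor k (v a) = lincomb (\<lambda>b. tensor k (v b)) B \<gamma>"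
proof
  fix a assume "a \<in> A"
  with assms(2) obtain \<beta> where \<beta>: "tensor (Suc k) (v a) = lincomb (\<lambda>b. tensor (Suc k) (v b)) B \<beta>"
    by blast
  from assms(1) \<open>a \<in> A\<close> obtain t where t: "v a (Suc k) t \<noteq> 0"
    by (auto simp: fun_eq_iff)
  then have "tensor k (v a) = fscale (inverse (v a (Suc k) t)) (fscale (v a (Suc k) t) (tensor k (v a)))"
    by (simp add: fscale_def fun_eq_iff)
  also have "\<dots> = lincomb (\<lambda>b. tensor k (v b)) B (\<lambda>b. inverse (v a (Suc k) t) * (\<beta> b * v b (Suc k) t))"
    by (simp only: lincomb_tensor_Suc_slice[OF \<beta>] lincomb_fscale)
  finally show "\<exists>\<gamma>. tensor k (v a) = lincomb (\<lambda>b. tensor k (v b)) B \<gamma>" by blast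
qed

text \<open>If \<open>x\<^sub>a = \<Sum>\<^sub>b \<gamma>\<^sub>b x\<^sub>b\<close> and \<open>x\<^sub>a \<otimes> w\<^sub>a = \<Sum>\<^sub>b \<beta>\<^sub>b x\<^sub>b \<otimes> w\<^sub>b\<close> with the \<open>x\<^sub>b\<close> independent,
  evaluating the last factor at any point \<open>t\<close> gives \<open>\<gamma>\<^sub>b w\<^sub>a(t) = \<beta>\<^sub>b w\<^sub>b(t)\<close>.\<close>
lemma lincomb_tensor_Suc_parallel:
  assumes indep: "lin_indep_family B (\<lambda>b. tensor k (v b))"
    and \<gamma>: "tensor k (v a) = lincomb (\<lambda>b. tensor k (v b)) B \<gamma>"
    and \<beta>: "tensor (Suc k) (v a) = lincomb (\<lambda>b. tensor (Suc k) (v b)) B \<beta>"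
    and "b \<in> B" "\<gamma> b \<noteq> 0"
  shows "parallel (v a (Suc k)) (v b (Suc k))"
proof -
  have "v a (Suc k) t * \<gamma> b = \<beta> b * v b (Suc k) t" for t
  proof -
    have "lincomb (\<lambda>b. tensor k (v b)) B (\<lambda>b. v a (Suc k) t * \<gamma> b) =
        fscale (v a (Suc k) t) (tensor k (v a))"
      by (subst \<gamma>) (rule lincomb_fscale[symmetric])
    also have "\<dots> = lincomb (\<lambda>b. tensor k (v b)) B (\<lambda>b. \<beta> b * v b (Suc k) t)"
      by (rule lincomb_tensor_Suc_slice[OF \<beta>])
    finally show ?thesis
      using indep \<open>b \<in> B\<close> by (intro lin_indep_family_coeff_unique)
  qed
  with \<open>\<gamma> b \<noteq> 0\<close> have "v a (Suc k) = fscale (\<beta> b / \<gamma> b) (v b (Suc k))"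
    by (simp add: fscale_def fun_eq_iff field_simps)
  then show ?thesis by (auto simp: parallel_def)
qed

lemma span_connected_invariant:
  assumes conn: "span_connected A v"
    and indep: "lin_indep_family B v"
    and expand: "\<forall>a\<in>A. v a = lincomb v B (\<gamma> a)"
    and invariant: "\<forall>a\<in>A. \<forall>b\<in>B. \<gamma> a b \<noteq> 0 \<longrightarrow> (P a \<longleftrightarrow> P b)"
    and "a0 \<in> A" "P a0"
  shows "\<forall>a\<in>A. P a"
proof (rule ccontr)
  define A1 where "A1 = {a\<in>A. P a}"
  assume "\<not> (\<forall>a\<in>A. P a)"
  then have "A1 \<noteq> A" by (auto simp: A1_def)
  moreover have "A1 \<noteq> {}" "A1 \<subseteq> A" using \<open>a0 \<in> A\<close> \<open>P a0\<close> by (auto simp: A1_def)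
  ultimately obtain g c d where g: "g \<noteq> 0" "g = lincomb v A1 c" "g = lincomb v (A - A1) d"
    using conn unfolding span_connected_def by blast
  define c' where "c' b = (\<Sum>a\<in>A1. c a * \<gamma> a b)" for b
  define d' where "d' b = (\<Sum>a\<in>A - A1. d a * \<gamma> a b)" for b
  have g_c': "g = lincomb v B c'"
    unfolding g(2) c'_def by (rule lincomb_compose) (use expand \<open>A1 \<subseteq> A\<close> in blast)
  have g_d': "g = lincomb v B d'"
    unfolding g(3) d'_def by (rule lincomb_compose) (use expand in blast)
  have "c' b = 0" if "b \<in> B" for b
  proof (cases "P b")
    case True
    with invariant that have "\<forall>a\<in>A - A1. \<gamma> a b = 0" by (auto simp: A1_def)
    then have "d' b = 0" by (simp add: d'_def)
    moreover have "c' b = d' b"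
      by (rule lin_indep_family_coeff_unique[OF indep trans[OF g_c'[symmetric] g_d'] that])
    ultimately show ?thesis by simp
  next
    case False
    with invariant that have "\<forall>a\<in>A1. \<gamma> a b = 0" by (auto simp: A1_def)
    then show ?thesis by (simp add: c'_def)
  qed
  with g_c' have "g = 0" by (simp add: fun_eq_iff)
  with \<open>g \<noteq> 0\<close> show False ..
qed

lemma not_lin_indep_if_last_factors_nonparallel:
  fixes v :: "'i \<Rightarrow> nat \<Rightarrow> 'b \<Rightarrow> 'a::field"
  assumes conn: "span_connected A (\<lambda>a. tensor k (v a))" and "B \<subseteq> A"
    and nonzero: "\<forall>a\<in>A. \<forall>j\<in>{1..Suc k}. v a j \<noteq> 0"
    and spanned: "\<forall>a\<in>A. \<exists>\<beta>. tensor (Suc k) (v a) = lincomb (\<lambda>b. tensor (Suc k) (v b)) B \<beta>"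
    and "a1 \<in> A" "a2 \<in> A" "\<not> parallel (v a1 (Suc k)) (v a2 (Suc k))"
  shows "\<not> lin_indep_family B (\<lambda>b. tensor k (v b))"
proof
  assume indep: "lin_indep_family B (\<lambda>b. tensor k (v b))"
  define w where "w a = v a (Suc k)" for a
  have last_nonzero: "\<forall>a\<in>A. w a \<noteq> 0"
    using nonzero by (simp add: w_def)
  then have w_nonzero: "w a \<noteq> 0" if "a \<in> A" for a
    using that by blast
  obtain \<beta> where \<beta>: "\<forall>a\<in>A. tensor (Suc k) (v a) = lincomb (\<lambda>b. tensor (Suc k) (v b)) B (\<beta> a)"
    using bchoice[OF spanned] by (elim exE) blast
  have "\<forall>a\<in>A. \<exists>\<gamma>. tensor k (v a) = lincomb (\<lambda>b. tensor k (v b)) B \<gamma>"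
    using last_nonzero spanned unfolding w_def by (rule spanned_tensor_Suc)
  then obtain \<gamma> where \<gamma>: "\<forall>a\<in>A. tensor k (v a) = lincomb (\<lambda>b. tensor k (v b)) B (\<gamma> a)"
    by (elim bchoice[THEN exE]) blast
  have "B \<noteq> {}"
  proof
    assume "B = {}"
    with \<gamma> \<open>a1 \<in> A\<close> have "tensor k (v a1) = 0"
      by (simp add: lincomb_def)
    moreover have "tensor k (v a1) \<noteq> 0"
      using nonzero \<open>a1 \<in> A\<close> by (intro tensor_nonzero) auto
    ultimately show False by contradiction
  qed
  then obtain b0 where "b0 \<in> B" by blast
  have "\<forall>a\<in>A. \<forall>b\<in>B. \<gamma> a b \<noteq> 0 \<longrightarrow> (parallel (w a) (w b0) \<longleftrightarrow> parallel (w b) (w b0))"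
  proof (intro ballI impI)
    fix a b assume "a \<in> A" "b \<in> B" "\<gamma> a b \<noteq> 0"
    have "parallel (w a) (w b)"
      using indep \<gamma>[rule_format, OF \<open>a \<in> A\<close>] \<beta>[rule_format, OF \<open>a \<in> A\<close>] \<open>b \<in> B\<close> \<open>\<gamma> a b \<noteq> 0\<close>
      unfolding w_def by (rule lincomb_tensor_Suc_parallel)
    moreover have "parallel (w b) (w a)"
      using calculation w_nonzero[OF \<open>a \<in> A\<close>] by (rule parallel_sym)
    ultimately show "parallel (w a) (w b0) \<longleftrightarrow> parallel (w b) (w b0)"
      by (blast intro: parallel_trans[of "w a" "w b"] parallel_trans[of "w b" "w a"])
  qed
  then have "\<forall>a\<in>A. parallel (w a) (w b0)"
    by (rule span_connected_invariant[OF conn indep \<gamma>, of _ b0])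
      (use \<open>b0 \<in> B\<close> \<open>B \<subseteq> A\<close> in \<open>auto intro: parallel_refl\<close>)
  then have "parallel (w a1) (w b0)" "parallel (w a2) (w b0)"
    using \<open>a1 \<in> A\<close> \<open>a2 \<in> A\<close> by blast+
  then have "parallel (w a1) (w a2)"
    using parallel_sym w_nonzero[OF \<open>a2 \<in> A\<close>] parallel_trans by blast
  with assms(7) show False
    by (simp add: w_def)
qed

lemma nonparallel_positions_Suc:
  "nonparallel_positions (Suc k) v A =
    (if \<forall>a\<in>A. \<forall>b\<in>A. parallel (v a (Suc k)) (v b (Suc k))
     then nonparallel_positions k v A else insert (Suc k) (nonparallel_positions k v A))"
  by (auto simp: nonparallel_positions_def le_Suc_eq)

theorem card_nonparallel_positions_less:
  fixes v :: "'i \<Rightarrow> nat \<Rightarrow> 'b \<Rightarrow> 'a::field"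
  assumes "finite A" "A \<noteq> {}"
    and "\<forall>a\<in>A. \<forall>j\<in>{1..m}. v a j \<noteq> 0"
    and "span_connected A (\<lambda>a. tensor m (v a))" "B \<subseteq> A"
    and "\<forall>a\<in>A. \<exists>c. tensor m (v a) = lincomb (\<lambda>b. tensor m (v b)) B c"
  shows "card (nonparallel_positions m v A) < card B"
  using assms(3-)
proof (induction m arbitrary: B)
  case 0
  from \<open>A \<noteq> {}\<close> obtain a where "a \<in> A" by blast
  with "0.prems"(4) obtain c where "tensor 0 (v a) = lincomb (\<lambda>b. tensor 0 (v b)) B c" by blast
  then have "B \<noteq> {}" by (auto simp: tensor_def fun_eq_iff)
  moreover have "finite B" using "0.prems"(3) \<open>finite A\<close> by (rule finite_subset)
  ultimately show ?case by (simp add: nonparallel_positions_def card_gt_0_iff)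
next
  case (Suc k)
  have nonzero: "\<forall>a\<in>A. \<forall>j\<in>{1..k}. v a j \<noteq> 0"
    and last_nonzero: "\<forall>a\<in>A. v a (Suc k) \<noteq> 0"
    using Suc.prems(1) by (simp_all add: atLeastAtMostSuc_conv zero_fun_def)
  have conn: "span_connected A (\<lambda>a. tensor k (v a))"
    using Suc.prems(2) by (rule span_connected_tensor_Suc)
  have spanned: "\<forall>a\<in>A. \<exists>\<gamma>. tensor k (v a) = lincomb (\<lambda>b. tensor k (v b)) B \<gamma>"
    using last_nonzero Suc.prems(4) by (rule spanned_tensor_Suc)
  have finite_positions: "finite (nonparallel_positions k v A)"
    by (simp add: nonparallel_positions_def)
  show ?case
  proof (cases "\<forall>a\<in>A. \<forall>b\<in>A. parallel (v a (Suc k)) (v b (Suc k))")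
    case True
    with Suc.IH[OF nonzero conn Suc.prems(3) spanned] show ?thesis
      by (simp add: nonparallel_positions_Suc)
  next
    case False
    then obtain a1 a2 where "a1 \<in> A" "a2 \<in> A" "\<not> parallel (v a1 (Suc k)) (v a2 (Suc k))"
      by blast
    with conn Suc.prems(3,1,4) have "\<not> lin_indep_family B (\<lambda>b. tensor k (v b))"
      by (rule not_lin_indep_if_last_factors_nonparallel)
    have "finite B"
      using Suc.prems(3) \<open>finite A\<close> by (rule finite_subset)
    with \<open>\<not> lin_indep_family B (\<lambda>b. tensor k (v b))\<close> obtain b0 where "b0 \<in> B"
      and "\<forall>a\<in>A. \<exists>\<gamma>. tensor k (v a) = lincomb (\<lambda>b. tensor k (v b)) (B - {b0}) \<gamma>"
      using spanned by (rule spanned_Diff_if_not_lin_indep)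
    with Suc.IH[OF nonzero conn] Suc.prems(3)
    have IH: "card (nonparallel_positions k v A) < card (B - {b0})"
      by blast
    have "card (nonparallel_positions (Suc k) v A) \<le> Suc (card (nonparallel_positions k v A))"
      using False finite_positions by (simp add: nonparallel_positions_Suc card_insert_if)
    also have "\<dots> \<le> card (B - {b0})"
      using IH by (rule Suc_leI)
    also have "\<dots> < card B"
      using \<open>finite B\<close> \<open>b0 \<in> B\<close> by (rule card_Diff1_less)
    finally show ?thesis .
  qed
qed

lemma span_connected_insert_relation:
  assumes "finite I" "i0 \<notin> I" "lin_indep_family I v"
    and relation: "v i0 = lincomb v I \<alpha>" and "\<forall>i\<in>I. \<alpha> i \<noteq> 0"
  shows "span_connected (insert i0 I) v"
  unfolding span_connected_def
proof (intro allI impI)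
  fix A1 assume A1: "A1 \<subseteq> insert i0 I" "A1 \<noteq> {}" "A1 \<noteq> insert i0 I"
  define A2 where "A2 = insert i0 I - A1"
  define \<kappa> where "\<kappa> i = (if i = i0 then -1 else \<alpha> i)" for i
  have \<kappa>_nonzero: "\<kappa> i \<noteq> 0" if "i \<in> I" for i
    using that assms(2,5) by (auto simp: \<kappa>_def)
  have "lincomb v I \<kappa> = lincomb v I \<alpha>"
    unfolding lincomb_def using assms(2) by (intro sum.cong) (auto simp: \<kappa>_def)
  then have "lincomb v (insert i0 I) \<kappa> = 0"
    using assms(1,2) relation by (simp add: fun_eq_iff \<kappa>_def)
  moreover have "lincomb v (insert i0 I) \<kappa> = lincomb v A1 \<kappa> + lincomb v A2 \<kappa>"
    using A1(1) \<open>finite I\<close> by (simp add: fun_eq_iff A2_def sum.subset_diff[of A1 "insert i0 I"])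
  ultimately have A2_eq: "lincomb v A1 \<kappa> = lincomb v A2 (\<lambda>i. - \<kappa> i)"
    by (simp add: fun_eq_iff eq_neg_iff_add_eq_0 sum_negf)
  have nonzero: "lincomb v C e \<noteq> 0" if "C \<subseteq> I" "C \<noteq> {}" "\<forall>i\<in>C. e i \<noteq> 0" for C e
    using lin_indep_family_subset[OF assms(3,1) \<open>C \<subseteq> I\<close>] that(2,3)
    unfolding lin_indep_family_lincomb by blast
  have "lincomb v A1 \<kappa> \<noteq> 0"
  proof (cases "i0 \<in> A1")
    case True
    with A1 have "A2 \<subseteq> I" "A2 \<noteq> {}" by (auto simp: A2_def)
    with \<kappa>_nonzero have "lincomb v A2 (\<lambda>i. - \<kappa> i) \<noteq> 0"
      by (intro nonzero) auto
    with A2_eq show ?thesis by simp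
  next
    case False
    with A1(1,2) \<kappa>_nonzero show ?thesis
      by (intro nonzero) (auto simp: subset_insert)
  qed
  with A2_eq show "\<exists>g. g \<noteq> 0 \<and> (\<exists>c. g = lincomb v A1 c) \<and> (\<exists>d. g = lincomb v (insert i0 I - A1) d)"
    unfolding A2_def by blast
qed

lemma dim_span_le_1_if_parallel:
  fixes S :: "('b \<Rightarrow> 'a::field) set"
  assumes "\<forall>u\<in>S. parallel u w"
  shows "vector_space.dim fscale (module.span fscale S) \<le> 1"
proof -
  interpret V: vector_space "fscale :: 'a \<Rightarrow> ('b \<Rightarrow> 'a) \<Rightarrow> _"
    by (rule vector_space_fscale)
  have "S \<subseteq> V.span {w}"
  proof
    fix u assume "u \<in> S"
    with assms obtain c where "u = fscale c w" by (auto simp: parallel_def)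
    then show "u \<in> V.span {w}" by (simp add: V.span_base V.span_scale)
  qed
  then have "V.dim S \<le> card {w}"
    by (rule V.dim_le_card) simp
  then show ?thesis by simp
qed

lemma card_dim_span_gt_1_le_card_nonparallel_positions:
  fixes v :: "'i \<Rightarrow> nat \<Rightarrow> 'b \<Rightarrow> 'a::field"
  assumes "A' \<subseteq> A"
  shows "card {j\<in>{1..m}. vector_space.dim fscale (module.span fscale {v a j | a. a \<in> A'}) > 1}
    \<le> card (nonparallel_positions m v A)"
proof (rule card_mono)
  show "finite (nonparallel_positions m v A)"
    by (simp add: nonparallel_positions_def)
  show "{j\<in>{1..m}. vector_space.dim fscale (module.span fscale {v a j | a. a \<in> A'}) > 1}
    \<subseteq> nonparallel_positions m v A"
  proof (rule subsetI, rule ccontr)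
    fix j assume j: "j \<in> {j\<in>{1..m}. vector_space.dim fscale (module.span fscale {v a j | a. a \<in> A'}) > 1}"
      and "j \<notin> nonparallel_positions m v A"
    then have all_parallel: "\<forall>a\<in>A. \<forall>b\<in>A. parallel (v a j) (v b j)"
      by (simp add: nonparallel_positions_def)
    have "\<exists>w. \<forall>u\<in>{v a j | a. a \<in> A'}. parallel u w"
    proof (cases "A' = {}")
      case False
      then obtain a' where "a' \<in> A'" by blast
      with all_parallel assms show ?thesis by blast
    qed simp
    then obtain w where "\<forall>u\<in>{v a j | a. a \<in> A'}. parallel u w" ..
    from dim_span_le_1_if_parallel[OF this] j show False by simp
  qed
qed

lemma spanned_insert_relation:
  assumes "finite I" "v i0 = lincomb v I \<alpha>"
  shows "\<forall>a\<in>insert i0 I. \<exists>c. v a = lincomb v I c"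
proof
  fix a assume "a \<in> insert i0 I"
  then consider "a = i0" | "a \<in> I" by blast
  then show "\<exists>c. v a = lincomb v I c"
  proof cases
    case 2
    with lincomb_delta[OF assms(1), of a v] show ?thesis by blast
  qed (use assms(2) in blast)
qed

theorem corollary1:
  fixes n m :: nat and x :: "nat \<Rightarrow> nat \<Rightarrow> 'b \<Rightarrow> 'a::field" and \<alpha> :: "nat \<Rightarrow> 'a"
  assumes "n > 0" and "m > 0"
    and "\<forall>a\<in>{1..n}. \<forall>j\<in>{1..m}. x a j \<noteq> 0"
    and "lin_indep_family {1..n} (\<lambda>a. tensor m (x a))"
    and "\<forall>a\<in>{1..n}. \<alpha> a \<noteq> 0"
    and "product_vector m (\<Sum>a\<in>{1..n}. fscale (\<alpha> a) (tensor m (x a)))"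
  shows "card {j\<in>{1..m}. vector_space.dim fscale
                 (module.span fscale {x a j | a. a \<in> {1..n}}) > 1} \<le> n - 1"
proof -
  obtain y where y: "\<forall>j\<in>{1..m}. y j \<noteq> 0"
    and sum_y: "lincomb (\<lambda>a. tensor m (x a)) {1..n} \<alpha> = tensor m y"
    using assms(6) unfolding product_vector_def lincomb_def by blast
  define v where "v = x(0 := y)"
  have v_x: "v a = x a" if "a \<in> {1..n}" for a
    using that by (simp add: v_def)
  have lincomb_v: "lincomb (\<lambda>a. tensor m (v a)) {1..n} c = lincomb (\<lambda>a. tensor m (x a)) {1..n} c" for c
    unfolding lincomb_def by (rule sum.cong) (simp_all add: v_x)
  have indep: "lin_indep_family {1..n} (\<lambda>a. tensor m (v a))"
    using assms(4) by (simp only: lin_indep_family_lincomb lincomb_v)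
  have relation: "tensor m (v 0) = lincomb (\<lambda>a. tensor m (v a)) {1..n} \<alpha>"
    using sum_y by (simp only: lincomb_v) (simp add: v_def)
  have "card (nonparallel_positions m v (insert 0 {1..n})) < card {1..n}"
  proof (rule card_nonparallel_positions_less)
    show "span_connected (insert 0 {1..n}) (\<lambda>a. tensor m (v a))"
      using indep relation assms(5) by (intro span_connected_insert_relation) auto
    show "\<forall>a\<in>insert 0 {1..n}. \<exists>c. tensor m (v a) = lincomb (\<lambda>b. tensor m (v b)) {1..n} c"
      using relation by (intro spanned_insert_relation) auto
    show "\<forall>a\<in>insert 0 {1..n}. \<forall>j\<in>{1..m}. v a j \<noteq> 0"
      using y assms(3) by (simp add: v_def)
  qed auto
  moreover have "{x a j | a. a \<in> {1..n}} = {v a j | a. a \<in> {1..n}}" for j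
    using v_x by force
  then have "card {j\<in>{1..m}. vector_space.dim fscale (module.span fscale {x a j | a. a \<in> {1..n}}) > 1}
      \<le> card (nonparallel_positions m v (insert 0 {1..n}))"
    by (simp only:) (rule card_dim_span_gt_1_le_card_nonparallel_positions[OF subset_insertI])
  ultimately show ?thesis by simp
qed

end
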